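(* Let $a>0$, $b>0$, $c>0$ and put $\Phi(x)={}_1F_2\left(a\,;b,c\,;-\frac{x^2}{4}\right)$. Suppose $\Phi$ alternates in sign on $(0,\infty)$ and let $z_1$ denote its first zero on $(0,\infty)$. Then for any $\gamma\ge0$, $0\le\delta<b$, $0\le\epsilon<c$, the function $$\Psi(x)={}_1F_2\left(a+\gamma\,;b-\delta,\,c-\epsilon\,;-\frac{x^2}{4}\right)$$ also alternates in sign and possesses at least one zero on $(0,z_1]$.
   Context: For $a,b,c>0$, ${}_1F_2\left(a\,;b,c\,;-\frac{x^2}{4}\right)=\sum_{k=0}^\infty \frac{(a)_k}{k!\,(b)_k(c)_k}\left(-\frac{x^2}{4}\right)^k$, where $(\alpha)_k=\Gamma(\alpha+k)/\Gamma(\alpha)$. "Alternates in sign" means takes both positive and negative values on $(0,\infty)$. *)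

theory Defs
  imports "HOL-Analysis.Analysis"
begin

text \<open>The generalized hypergeometric function 1F2(a; b, c; y), given by its power series
  (which converges for every real y when b, c > 0).\<close>
definition hyp1F2 :: "real \<Rightarrow> real \<Rightarrow> real \<Rightarrow> real \<Rightarrow> real" where
  "hyp1F2 a b c y = (\<Sum>k. pochhammer a k / (fact k * pochhammer b k * pochhammer c k) * y ^ k)"

definition alternates_sign :: "(real \<Rightarrow> real) \<Rightarrow> bool" where
  "alternates_sign f \<longleftrightarrow> (\<exists>x>0. f x > 0) \<and> (\<exists>x>0. f x < 0)"

definition first_pos_zero :: "(real \<Rightarrow> real) \<Rightarrow> real" where
  "first_pos_zero f = Inf {x. x > 0 \<and> f x = 0}"

end

theory Submission
  imports Defs "HOL-Real_Asymp.Real_Asymp"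
begin

text \<open>
  For \<open>p, q > 0\<close> and an everywhere convergent power series \<open>F t = (\<Sum>k. \<alpha> k * t ^ k)\<close>,
  termwise integration against the Beta weight gives
  \<open>B(p,q) * (\<Sum>k. \<alpha> k * (p)\<^sub>k / (p+q)\<^sub>k * y ^ k) = \<integral>\<^sub>0\<^sup>1 s\<^bsup>p-1\<^esup> (1-s)\<^bsup>q-1\<^esup> F(s y) ds\<close>,
  so a series whose coefficients are multiplied by such a ratio inherits nonnegativity, and
  positivity, of \<open>F\<close> on a segment \<open>[y, 0]\<close>. Lowering the numerator parameter of \<open>\<^sub>1F\<^sub>2\<close> from
  \<open>a + \<gamma>\<close> to \<open>a\<close>, or raising a denominator parameter from \<open>b - \<delta>\<close> to \<open>b\<close>, is of this form; hence
  if \<open>\<Psi>\<close> were nonnegative on \<open>[0, x]\<close>, then \<open>\<Phi>(x) \<ge> 0\<close>, and if \<open>\<Psi>\<close> were positive on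
  \<open>[0, z\<^sub>1]\<close>, then \<open>\<Phi>(z\<^sub>1) > 0\<close>. Both contradict the hypotheses on \<open>\<Phi>\<close>, and the
  intermediate value theorem turns the second contradiction into a zero of \<open>\<Psi>\<close> in \<open>(0, z\<^sub>1]\<close>.
\<close>

definition hyp1F2_coeff :: "real \<Rightarrow> real \<Rightarrow> real \<Rightarrow> nat \<Rightarrow> real" where
  "hyp1F2_coeff a b c k = pochhammer a k / (fact k * pochhammer b k * pochhammer c k)"

lemma hyp1F2_eq_suminf_coeff: "hyp1F2 a b c y = (\<Sum>k. hyp1F2_coeff a b c k * y ^ k)"
  unfolding hyp1F2_def hyp1F2_coeff_def ..

lemma hyp1F2_commute: "hyp1F2 a b c = hyp1F2 a c b"
  unfolding hyp1F2_def by (simp add: mult_ac)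

lemma hyp1F2_at_0 [simp]: "hyp1F2 a b c 0 = 1"
  unfolding hyp1F2_eq_suminf_coeff using powser_zero[of "hyp1F2_coeff a b c"]
  by (simp add: hyp1F2_coeff_def)

lemma hyp1F2_coeff_Suc:
  assumes "b > 0" "c > 0"
  shows "hyp1F2_coeff a b c (Suc k) = hyp1F2_coeff a b c k * ((a + k) / ((k + 1) * (b + k) * (c + k)))"
proof -
  have "pochhammer b k > 0" "pochhammer c k > 0" "b + k > 0" "c + k > 0"
    using assms by (auto intro: pochhammer_pos)
  then show ?thesis
    unfolding hyp1F2_coeff_def pochhammer_Suc fact_Suc by (simp add: field_simps)
qed

lemma summable_hyp1F2_coeff:
  assumes "b > 0" "c > 0"
  shows "summable (\<lambda>k. norm (hyp1F2_coeff a b c k * y ^ k))"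
proof -
  define r where "r n = \<bar>(a + n) / ((n + 1) * (b + n) * (c + n))\<bar> * \<bar>y\<bar>" for n :: nat
  have "(r \<longlongrightarrow> 0) sequentially"
    unfolding r_def using assms by real_asymp
  then have "\<forall>\<^sub>F n in sequentially. r n < 1/2"
    by (intro order_tendstoD) auto
  then obtain N where N: "\<And>n. n \<ge> N \<Longrightarrow> r n < 1/2"
    by (auto simp: eventually_sequentially)
  show ?thesis
  proof (rule summable_ratio_test[of "1/2" N])
    fix n assume "N \<le> n"
    have "norm (norm (hyp1F2_coeff a b c (Suc n) * y ^ Suc n))
          = r n * norm (hyp1F2_coeff a b c n * y ^ n)"
      using assms by (simp add: hyp1F2_coeff_Suc r_def abs_mult add.commute mult_ac)
    also have "\<dots> \<le> 1/2 * norm (hyp1F2_coeff a b c n * y ^ n)"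
      using N[OF \<open>N \<le> n\<close>] by (intro mult_right_mono) auto
    finally show "norm (norm (hyp1F2_coeff a b c (Suc n) * y ^ Suc n))
                  \<le> 1/2 * norm (norm (hyp1F2_coeff a b c n * y ^ n))" by simp
  qed simp
qed

lemma isCont_hyp1F2:
  assumes "b > 0" "c > 0"
  shows "isCont (hyp1F2 a b c) y"
  unfolding hyp1F2_eq_suminf_coeff[abs_def]
  by (intro isCont_powser_converges_everywhere summable_norm_cancel[OF summable_hyp1F2_coeff] assms)

definition Beta_weight :: "real \<Rightarrow> real \<Rightarrow> real \<Rightarrow> real" where
  "Beta_weight p q s = s powr (p - 1) * (1 - s) powr (q - 1)"

lemma Beta_weight_nonneg: "Beta_weight p q s \<ge> 0"
  by (simp add: Beta_weight_def)

lemma has_integral_Beta_moment: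
  assumes "p > 0" "q > 0"
  shows "((\<lambda>s. s ^ k * Beta_weight p q s) has_integral Beta (p + real k) q) {0..1}"
proof (rule has_integral_eq[OF _ has_integral_Beta_real[of "p + real k" q]])
  fix s :: real assume "s \<in> {0..1}"
  then consider "s = 0" | "s > 0" by fastforce
  then show "s powr (p + real k - 1) * (1 - s) powr (q - 1) = s ^ k * Beta_weight p q s"
  proof cases
    case 2
    then have "s powr (p + real k - 1) = s powr (p - 1) * s powr real k"
      by (simp add: algebra_simps flip: powr_add)
    with \<open>s > 0\<close> have "s powr (p + real k - 1) = s powr (p - 1) * s ^ k"
      by (simp add: powr_realpow)
    then show ?thesis by (simp add: Beta_weight_def)
  qed (use assms in \<open>simp add: Beta_weight_def\<close>)
qed (use assms in auto)

lemma Beta_pos_real: "(p::real) > 0 \<Longrightarrow> q > 0 \<Longrightarrow> Beta p q > 0"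
  unfolding Beta_def by simp

lemma Beta_shift_divide:
  assumes "p > 0" "q > (0::real)"
  shows "Beta (p + real k) q / Beta p q = pochhammer p k / pochhammer (p + q) k"
proof -
  have "p \<notin> \<int>\<^sub>\<le>\<^sub>0" "p + q \<notin> \<int>\<^sub>\<le>\<^sub>0"
    using assms by (auto elim: nonpos_Ints_cases)
  then have pochhammer_eqs: "pochhammer p k = Gamma (p + k) / Gamma p"
    "pochhammer (p + q) k = Gamma (p + q + k) / Gamma (p + q)"
    by (simp_all add: pochhammer_Gamma)
  have "Gamma p > 0" "Gamma q > 0" "Gamma (p + q) > 0" "Gamma (p + k) > 0"
    "Gamma (p + q + k) > 0"
    using assms by auto
  then show ?thesis
    unfolding Beta_def pochhammer_eqs by (simp add: field_simps add_ac)
qed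

lemma norm_powser_partial_sum_le:
  fixes \<alpha> :: "nat \<Rightarrow> real"
  assumes "summable (\<lambda>k. norm (\<alpha> k * y ^ k))" "s \<in> {0..1}"
  shows "norm (\<Sum>k<n. \<alpha> k * (s * y) ^ k) \<le> (\<Sum>k. norm (\<alpha> k * y ^ k))"
proof -
  have "norm (\<Sum>k<n. \<alpha> k * (s * y) ^ k) \<le> (\<Sum>k<n. norm (\<alpha> k * y ^ k))"
  proof (rule order_trans[OF norm_sum sum_mono])
    fix k
    have "\<bar>\<alpha> k * y ^ k\<bar> * s ^ k \<le> \<bar>\<alpha> k * y ^ k\<bar>"
      using assms(2) by (intro mult_left_le power_le_one) auto
    then show "norm (\<alpha> k * (s * y) ^ k) \<le> norm (\<alpha> k * y ^ k)"
      using assms(2) by (simp add: abs_mult power_mult_distrib mult_ac)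
  qed
  also have "\<dots> \<le> (\<Sum>k. norm (\<alpha> k * y ^ k))"
    by (intro sum_le_suminf assms(1)) auto
  finally show ?thesis .
qed

lemma Beta_transform_powser:
  fixes \<alpha> :: "nat \<Rightarrow> real"
  assumes summable: "\<And>R. summable (\<lambda>k. norm (\<alpha> k * R ^ k))" and "p > 0" "q > 0"
  shows "((\<lambda>s. Beta_weight p q s * (\<Sum>k. \<alpha> k * (s * y) ^ k)) has_integral
           Beta p q * (\<Sum>k. \<alpha> k * (pochhammer p k / pochhammer (p + q) k) * y ^ k)) {0..1}"
proof -
  define f where "f n s = Beta_weight p q s * (\<Sum>k<n. \<alpha> k * (s * y) ^ k)" for n s
  define g where "g s = Beta_weight p q s * (\<Sum>k. \<alpha> k * (s * y) ^ k)" for s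
  define M where "M = (\<Sum>k. norm (\<alpha> k * y ^ k))"
  have f_integral: "(f n has_integral (\<Sum>k<n. \<alpha> k * Beta (p + real k) q * y ^ k)) {0..1}" for n
  proof -
    have "((\<lambda>s. \<Sum>k<n. (\<alpha> k * y ^ k) * (s ^ k * Beta_weight p q s)) has_integral
            (\<Sum>k<n. (\<alpha> k * y ^ k) * Beta (p + real k) q)) {0..1}"
      using assms by (intro has_integral_sum has_integral_mult_right has_integral_Beta_moment) auto
    then show ?thesis
      by (rule has_integral_eq[rotated, THEN has_integral_eq_rhs])
         (simp_all add: f_def sum_distrib_left power_mult_distrib mult_ac)
  qed
  have "(\<lambda>s. Beta_weight p q s * M) integrable_on {0..1}"
    using has_integral_mult_left[OF has_integral_Beta_real[OF assms(2,3)], of M]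
    unfolding Beta_weight_def by blast
  moreover have "norm (f n s) \<le> Beta_weight p q s * M" if "s \<in> {0..1}" for n s
    unfolding f_def M_def using norm_powser_partial_sum_le[OF summable that]
    by (simp add: abs_mult Beta_weight_nonneg mult_left_mono)
  moreover have "(\<lambda>n. f n s) \<longlonglongrightarrow> g s" for s
    unfolding f_def g_def
    by (intro tendsto_mult_left summable_LIMSEQ summable_norm_cancel[OF summable])
  ultimately have g_integrable: "g integrable_on {0..1}"
    and "(\<lambda>n. integral {0..1} (f n)) \<longlonglongrightarrow> integral {0..1} g"
    using dominated_convergence[of f "{0..1}"] f_integral by blast+
  then have "(\<lambda>k. \<alpha> k * Beta (p + real k) q * y ^ k) sums integral {0..1} g"
    by (simp add: sums_def integral_unique[OF f_integral])
  from sums_divide[OF this, of "Beta p q"]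
  have "(\<lambda>k. \<alpha> k * (pochhammer p k / pochhammer (p + q) k) * y ^ k)
      sums (integral {0..1} g / Beta p q)"
    by (simp add: Beta_shift_divide[OF assms(2,3), symmetric])
  moreover have "Beta p q > 0"
    using assms(2,3) by (rule Beta_pos_real)
  ultimately show ?thesis
    using g_integrable unfolding g_def by (simp add: sums_unique[symmetric] has_integral_integral)
qed

lemma has_integral_pos:
  fixes f :: "real \<Rightarrow> real"
  assumes f: "(f has_integral I) {a..b}" and nonneg: "\<forall>x\<in>{a..b}. 0 \<le> f x"
    and sub: "{c..d} \<subseteq> {a..b}" "c < d" and cont: "continuous_on {c..d} f"
    and x: "x \<in> {c..d}" "f x > 0"
  shows "I > 0"
proof -
  have f_integrable: "f integrable_on {c..d}"
    using integrable_on_subinterval[OF has_integral_integrable[OF f] sub(1)] .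
  have "integral {c..d} f \<noteq> 0"
  proof
    assume "integral {c..d} f = 0"
    with f_integrable have "(f has_integral 0) (cbox c d)"
      by (metis cbox_interval has_integral_integral)
    with has_integral_0_cbox_imp_0[of c d f x] cont nonneg sub x show False
      by auto
  qed
  moreover have "0 \<le> integral {c..d} f"
    using nonneg sub(1) by (intro integral_nonneg f_integrable) auto
  moreover have "integral {c..d} f \<le> I"
    using has_integral_subset_le[OF sub(1) integrable_integral[OF f_integrable] f nonneg] .
  ultimately show ?thesis
    by linarith
qed

lemma Beta_transform_powser_nonneg:
  fixes \<alpha> :: "nat \<Rightarrow> real"
  assumes "\<And>R. summable (\<lambda>k. norm (\<alpha> k * R ^ k))" "p > 0" "q > 0"
    and "\<forall>s\<in>{0..1}. 0 \<le> (\<Sum>k. \<alpha> k * (s * y) ^ k)"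
  shows "0 \<le> (\<Sum>k. \<alpha> k * (pochhammer p k / pochhammer (p + q) k) * y ^ k)"
proof -
  have "0 \<le> Beta p q * (\<Sum>k. \<alpha> k * (pochhammer p k / pochhammer (p + q) k) * y ^ k)"
    using assms(4) Beta_weight_nonneg
    by (intro has_integral_nonneg[OF Beta_transform_powser[OF assms(1-3)]]) auto
  then show ?thesis
    using Beta_pos_real[OF assms(2,3)] by (simp add: zero_le_mult_iff)
qed

lemma Beta_transform_powser_pos:
  fixes \<alpha> :: "nat \<Rightarrow> real"
  assumes summable: "\<And>R. summable (\<lambda>k. norm (\<alpha> k * R ^ k))" and "p > 0" "q > 0"
    and pos: "\<forall>s\<in>{0..1}. 0 < (\<Sum>k. \<alpha> k * (s * y) ^ k)"
  shows "0 < (\<Sum>k. \<alpha> k * (pochhammer p k / pochhammer (p + q) k) * y ^ k)"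
proof -
  have "isCont (\<lambda>t. \<Sum>k. \<alpha> k * t ^ k) t" for t
    by (intro isCont_powser_converges_everywhere summable_norm_cancel[OF summable])
  then have "isCont (\<lambda>s. \<Sum>k. \<alpha> k * (s * y) ^ k) s" for s
    by (rule isCont_o2[rotated]) (intro continuous_intros)
  moreover have "isCont (Beta_weight p q) s" if "s \<in> {1/4..3/4}" for s
    unfolding Beta_weight_def using that by (intro continuous_intros) auto
  ultimately have cont: "continuous_on {1/4..3/4}
      (\<lambda>s. Beta_weight p q s * (\<Sum>k. \<alpha> k * (s * y) ^ k))"
    by (intro continuous_at_imp_continuous_on ballI continuous_intros) auto
  have nonneg: "\<forall>s\<in>{0..1}. 0 \<le> Beta_weight p q s * (\<Sum>k. \<alpha> k * (s * y) ^ k)"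
    using pos Beta_weight_nonneg by (simp add: less_imp_le)
  have "0 < Beta_weight p q (1/2) * (\<Sum>k. \<alpha> k * (1/2 * y) ^ k)"
    using pos[rule_format, of "1/2"] by (simp add: Beta_weight_def)
  then have "0 < Beta p q * (\<Sum>k. \<alpha> k * (pochhammer p k / pochhammer (p + q) k) * y ^ k)"
    using has_integral_pos[OF Beta_transform_powser[OF assms(1-3)] nonneg _ _ cont, of "1/2"]
    by simp
  then show ?thesis
    using Beta_pos_real[OF assms(2,3)] by (simp add: zero_less_mult_iff)
qed

lemma mult_mem_Icc_nonpos:
  fixes s t y :: real
  assumes "s \<in> {0..1}" "t \<in> {y..0}"
  shows "s * t \<in> {y..0}"
proof -
  have "0 \<le> (1 - s) * - t"
    using assms by (intro mult_nonneg_nonneg) auto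
  then show ?thesis
    using assms by (auto simp: algebra_simps mult_nonneg_nonpos)
qed

lemma hyp1F2_coeff_lower_first:
  assumes "a > 0" "g \<ge> 0"
  shows "hyp1F2_coeff a b c k = hyp1F2_coeff (a + g) b c k * (pochhammer a k / pochhammer (a + g) k)"
proof -
  have "pochhammer (a + g) k > 0"
    using assms by (intro pochhammer_pos) auto
  then show ?thesis
    unfolding hyp1F2_coeff_def by (simp add: field_simps)
qed

lemma hyp1F2_coeff_raise_second:
  assumes "b > 0" "d \<ge> 0" "c > 0"
  shows "hyp1F2_coeff a (b + d) c k = hyp1F2_coeff a b c k * (pochhammer b k / pochhammer (b + d) k)"
proof -
  have "pochhammer b k > 0" "pochhammer (b + d) k > 0" "pochhammer c k > 0"
    using assms by (auto intro: pochhammer_pos)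
  then show ?thesis
    unfolding hyp1F2_coeff_def by (simp add: field_simps)
qed

lemma hyp1F2_lower_first:
  assumes "a > 0" "g \<ge> 0" "b > 0" "c > 0"
  shows "\<forall>t\<in>{y..0}. 0 \<le> hyp1F2 (a + g) b c t \<Longrightarrow> \<forall>t\<in>{y..0}. 0 \<le> hyp1F2 a b c t"
    and "\<forall>t\<in>{y..0}. 0 < hyp1F2 (a + g) b c t \<Longrightarrow> \<forall>t\<in>{y..0}. 0 < hyp1F2 a b c t"
proof -
  have summable: "\<And>R. summable (\<lambda>k. norm (hyp1F2_coeff (a + g) b c k * R ^ k))"
    using assms by (intro summable_hyp1F2_coeff)
  have eq: "hyp1F2 a b c t
      = (\<Sum>k. hyp1F2_coeff (a + g) b c k * (pochhammer a k / pochhammer (a + g) k) * t ^ k)" for t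
    by (simp add: hyp1F2_eq_suminf_coeff hyp1F2_coeff_lower_first[OF assms(1,2)])
  show "\<forall>t\<in>{y..0}. 0 \<le> hyp1F2 a b c t" if "\<forall>t\<in>{y..0}. 0 \<le> hyp1F2 (a + g) b c t"
  proof (cases "g = 0")
    case False
    show ?thesis
    proof
      fix t assume "t \<in> {y..0}"
      then have "\<forall>s\<in>{0..1}. 0 \<le> hyp1F2 (a + g) b c (s * t)"
        using that mult_mem_Icc_nonpos by blast
      then show "0 \<le> hyp1F2 a b c t"
        unfolding eq using Beta_transform_powser_nonneg[OF summable assms(1), of g t] False assms(2)
        by (simp add: hyp1F2_eq_suminf_coeff)
    qed
  qed (use that in simp)
  show "\<forall>t\<in>{y..0}. 0 < hyp1F2 a b c t" if "\<forall>t\<in>{y..0}. 0 < hyp1F2 (a + g) b c t"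
  proof (cases "g = 0")
    case False
    show ?thesis
    proof
      fix t assume "t \<in> {y..0}"
      then have "\<forall>s\<in>{0..1}. 0 < hyp1F2 (a + g) b c (s * t)"
        using that mult_mem_Icc_nonpos by blast
      then show "0 < hyp1F2 a b c t"
        unfolding eq using Beta_transform_powser_pos[OF summable assms(1), of g t] False assms(2)
        by (simp add: hyp1F2_eq_suminf_coeff)
    qed
  qed (use that in simp)
qed

lemma hyp1F2_raise_second:
  assumes "a > 0" "b > 0" "d \<ge> 0" "c > 0"
  shows "\<forall>t\<in>{y..0}. 0 \<le> hyp1F2 a b c t \<Longrightarrow> \<forall>t\<in>{y..0}. 0 \<le> hyp1F2 a (b + d) c t"
    and "\<forall>t\<in>{y..0}. 0 < hyp1F2 a b c t \<Longrightarrow> \<forall>t\<in>{y..0}. 0 < hyp1F2 a (b + d) c t"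
proof -
  have summable: "\<And>R. summable (\<lambda>k. norm (hyp1F2_coeff a b c k * R ^ k))"
    using assms by (intro summable_hyp1F2_coeff)
  have eq: "hyp1F2 a (b + d) c t
      = (\<Sum>k. hyp1F2_coeff a b c k * (pochhammer b k / pochhammer (b + d) k) * t ^ k)" for t
    by (simp add: hyp1F2_eq_suminf_coeff hyp1F2_coeff_raise_second[OF assms(2-4)])
  show "\<forall>t\<in>{y..0}. 0 \<le> hyp1F2 a (b + d) c t" if "\<forall>t\<in>{y..0}. 0 \<le> hyp1F2 a b c t"
  proof (cases "d = 0")
    case False
    show ?thesis
    proof
      fix t assume "t \<in> {y..0}"
      then have "\<forall>s\<in>{0..1}. 0 \<le> hyp1F2 a b c (s * t)"
        using that mult_mem_Icc_nonpos by blast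
      then show "0 \<le> hyp1F2 a (b + d) c t"
        unfolding eq using Beta_transform_powser_nonneg[OF summable assms(2), of d t] False assms(3)
        by (simp add: hyp1F2_eq_suminf_coeff)
    qed
  qed (use that in simp)
  show "\<forall>t\<in>{y..0}. 0 < hyp1F2 a (b + d) c t" if "\<forall>t\<in>{y..0}. 0 < hyp1F2 a b c t"
  proof (cases "d = 0")
    case False
    show ?thesis
    proof
      fix t assume "t \<in> {y..0}"
      then have "\<forall>s\<in>{0..1}. 0 < hyp1F2 a b c (s * t)"
        using that mult_mem_Icc_nonpos by blast
      then show "0 < hyp1F2 a (b + d) c t"
        unfolding eq using Beta_transform_powser_pos[OF summable assms(2), of d t] False assms(3)
        by (simp add: hyp1F2_eq_suminf_coeff)
    qed
  qed (use that in simp)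
qed

lemma hyp1F2_sign_transfer:
  assumes "0 < a" "a \<le> a'" "0 < b'" "b' \<le> b" "0 < c'" "c' \<le> c"
  shows "\<forall>t\<in>{y..0}. 0 \<le> hyp1F2 a' b' c' t \<Longrightarrow> \<forall>t\<in>{y..0}. 0 \<le> hyp1F2 a b c t"
    and "\<forall>t\<in>{y..0}. 0 < hyp1F2 a' b' c' t \<Longrightarrow> \<forall>t\<in>{y..0}. 0 < hyp1F2 a b c t"
proof -
  have a': "a' = a + (a' - a)" and b: "b = b' + (b - b')" and c: "c = c' + (c - c')"
    by simp_all
  note lower = hyp1F2_lower_first[of a "a' - a" b' c' y, folded a']
  note raise_b = hyp1F2_raise_second[of a b' "b - b'" c' y, folded b]
  note raise_c = hyp1F2_raise_second[of a c' "c - c'" b y, folded c, unfolded hyp1F2_commute[of a c]]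
  show "\<forall>t\<in>{y..0}. 0 \<le> hyp1F2 a b c t" if "\<forall>t\<in>{y..0}. 0 \<le> hyp1F2 a' b' c' t"
    using lower(1)[OF _ _ _ _ that] raise_b(1) raise_c(1) assms hyp1F2_commute by simp
  show "\<forall>t\<in>{y..0}. 0 < hyp1F2 a b c t" if "\<forall>t\<in>{y..0}. 0 < hyp1F2 a' b' c' t"
    using lower(2)[OF _ _ _ _ that] raise_b(2) raise_c(2) assms hyp1F2_commute by simp
qed

lemma ball_Icc_neg_quarter_square:
  fixes X :: real
  assumes "X \<ge> 0" "\<forall>x\<in>{0..X}. P (- (x\<^sup>2) / 4)"
  shows "\<forall>t\<in>{- (X\<^sup>2) / 4..0}. P t"
proof
  fix t assume t: "t \<in> {- (X\<^sup>2) / 4..0}"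
  have "sqrt (- t) \<le> sqrt ((X / 2)\<^sup>2)"
    using t by (intro real_sqrt_le_mono) (auto simp: power_divide)
  then have "2 * sqrt (- t) \<in> {0..X}"
    using assms(1) t by simp
  moreover have "t = - ((2 * sqrt (- t))\<^sup>2) / 4"
    using t by (simp add: power_mult_distrib)
  ultimately show "P t"
    using assms(2) by metis
qed

lemma alternates_sign_if_not_nonneg:
  fixes f :: "real \<Rightarrow> real"
  assumes "isCont f 0" "f 0 > 0" "\<not> (\<forall>x\<in>{0..X}. 0 \<le> f x)"
  shows "alternates_sign f"
proof -
  have "\<forall>\<^sub>F x in at_right 0. f x > 0"
    using assms(1,2) by (intro order_tendstoD(1)[OF tendsto_within_subset]) (auto simp: isCont_def)
  then obtain b where "b > 0" "\<And>y. 0 < y \<Longrightarrow> y < b \<Longrightarrow> f y > 0"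
    unfolding eventually_at_right_field by blast
  then have "f (b / 2) > 0" "b / 2 > 0"
    by auto
  moreover obtain x where "x \<ge> 0" "f x < 0"
    using assms(3) by (auto simp: not_le)
  moreover from this have "x \<noteq> 0"
    using assms(2) by auto
  ultimately show ?thesis
    unfolding alternates_sign_def by (metis order_le_less)
qed

lemma exists_pos_zero_if_not_pos:
  fixes f :: "real \<Rightarrow> real"
  assumes "\<And>x. isCont f x" "f 0 > 0" "\<not> (\<forall>x\<in>{0..X}. 0 < f x)"
  shows "\<exists>x. 0 < x \<and> x \<le> X \<and> f x = 0"
proof -
  obtain x where x: "0 \<le> x" "x \<le> X" "f x \<le> 0"
    using assms(3) by (auto simp: not_less)
  then obtain y where "0 \<le> y" "y \<le> x" "f y = 0"
    using IVT2'[of f x 0 0] assms by (auto intro: continuous_at_imp_continuous_on)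
  moreover from this have "y \<noteq> 0"
    using assms(2) by auto
  ultimately show ?thesis
    using x by (intro exI[of _ y]) auto
qed

lemma first_pos_zero_is_pos_zero:
  fixes f :: "real \<Rightarrow> real"
  assumes "\<And>x. isCont f x" "f 0 \<noteq> 0" "x > 0" "f x = 0"
  shows "first_pos_zero f > 0" "f (first_pos_zero f) = 0"
proof -
  define Z where "Z = {x. x > 0 \<and> f x = 0}"
  have "Z = {x \<in> {0..}. f x = 0}"
    using assms(2) by (auto simp: Z_def order_le_less)
  then have "closed Z"
    by (simp only:) (intro continuous_closed_preimage_constant continuous_at_imp_continuous_on
        ballI assms(1) closed_atLeast)
  moreover have "Z \<noteq> {}" "bdd_below Z"
    using assms(3,4) by (auto simp: Z_def intro: bdd_belowI[of _ 0])
  ultimately have "Inf Z \<in> Z"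
    by (intro closed_contains_Inf)
  then show "first_pos_zero f > 0" "f (first_pos_zero f) = 0"
    by (simp_all add: first_pos_zero_def Z_def)
qed

lemma isCont_hyp1F2_neg_quarter_square:
  assumes "b > 0" "c > 0"
  shows "isCont (\<lambda>x. hyp1F2 a b c (- (x\<^sup>2) / 4)) x"
  by (intro isCont_o2[OF _ isCont_hyp1F2[OF assms]] continuous_intros) simp

lemma hyp1F2_sign_transfer_neg_quarter_square:
  assumes "0 < a" "a \<le> a'" "0 < b'" "b' \<le> b" "0 < c'" "c' \<le> c" "X \<ge> 0"
  shows "\<forall>x\<in>{0..X}. 0 \<le> hyp1F2 a' b' c' (- (x\<^sup>2) / 4) \<Longrightarrow> 0 \<le> hyp1F2 a b c (- (X\<^sup>2) / 4)"
    and "\<forall>x\<in>{0..X}. 0 < hyp1F2 a' b' c' (- (x\<^sup>2) / 4) \<Longrightarrow> 0 < hyp1F2 a b c (- (X\<^sup>2) / 4)"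
proof -
  have X: "- (X\<^sup>2) / 4 \<in> {- (X\<^sup>2) / 4..0}"
    by simp
  show "0 \<le> hyp1F2 a b c (- (X\<^sup>2) / 4)" if "\<forall>x\<in>{0..X}. 0 \<le> hyp1F2 a' b' c' (- (x\<^sup>2) / 4)"
    using hyp1F2_sign_transfer(1)[OF assms(1-6)] ball_Icc_neg_quarter_square[OF assms(7) that] X
    by blast
  show "0 < hyp1F2 a b c (- (X\<^sup>2) / 4)" if "\<forall>x\<in>{0..X}. 0 < hyp1F2 a' b' c' (- (x\<^sup>2) / 4)"
    using hyp1F2_sign_transfer(2)[OF assms(1-6)] ball_Icc_neg_quarter_square[OF assms(7) that] X
    by blast
qed

theorem lemma2:
  fixes a b c \<gamma> \<delta> \<epsilon> :: real
  assumes "a > 0" "b > 0" "c > 0"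
    and "alternates_sign (\<lambda>x. hyp1F2 a b c (- (x\<^sup>2) / 4))"
    and "\<gamma> \<ge> 0" "0 \<le> \<delta>" "\<delta> < b" "0 \<le> \<epsilon>" "\<epsilon> < c"
  shows "alternates_sign (\<lambda>x. hyp1F2 (a + \<gamma>) (b - \<delta>) (c - \<epsilon>) (- (x\<^sup>2) / 4))
    \<and> (\<exists>x. 0 < x \<and> x \<le> first_pos_zero (\<lambda>x. hyp1F2 a b c (- (x\<^sup>2) / 4))
           \<and> hyp1F2 (a + \<gamma>) (b - \<delta>) (c - \<epsilon>) (- (x\<^sup>2) / 4) = 0)"
proof -
  define \<Phi> where "\<Phi> x = hyp1F2 a b c (- (x\<^sup>2) / 4)" for x
  define \<Psi> where "\<Psi> x = hyp1F2 (a + \<gamma>) (b - \<delta>) (c - \<epsilon>) (- (x\<^sup>2) / 4)" for x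
  note transfer = hyp1F2_sign_transfer_neg_quarter_square[of a "a + \<gamma>" "b - \<delta>" b "c - \<epsilon>" c]
  have transfer_nonneg: "0 \<le> \<Phi> X" if "X \<ge> 0" "\<forall>x\<in>{0..X}. 0 \<le> \<Psi> x" for X
    using transfer(1) that assms unfolding \<Phi>_def \<Psi>_def by simp
  have transfer_pos: "0 < \<Phi> X" if "X \<ge> 0" "\<forall>x\<in>{0..X}. 0 < \<Psi> x" for X
    using transfer(2) that assms unfolding \<Phi>_def \<Psi>_def by simp
  have \<Phi>_cont: "isCont \<Phi> x" and \<Psi>_cont: "isCont \<Psi> x" for x
    unfolding \<Phi>_def \<Psi>_def by (intro isCont_hyp1F2_neg_quarter_square; use assms in simp)+
  have \<Phi>_0: "\<Phi> 0 = 1" and \<Psi>_0: "\<Psi> 0 = 1"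
    by (simp_all add: \<Phi>_def \<Psi>_def)
  obtain x1 where x1: "x1 > 0" "\<Phi> x1 < 0"
    using assms(4) unfolding alternates_sign_def \<Phi>_def by blast
  then have "\<not> (\<forall>x\<in>{0..x1}. 0 < \<Phi> x)"
    by (intro notI) (auto dest: bspec[of _ _ x1])
  then obtain x0 where "0 < x0" "\<Phi> x0 = 0"
    using exists_pos_zero_if_not_pos[OF \<Phi>_cont] \<Phi>_0 by auto
  then have z1: "first_pos_zero \<Phi> > 0" "\<Phi> (first_pos_zero \<Phi>) = 0"
    using first_pos_zero_is_pos_zero[OF \<Phi>_cont] \<Phi>_0 by simp_all
  have "\<not> (\<forall>x\<in>{0..x1}. 0 \<le> \<Psi> x)"
    using transfer_nonneg[of x1] x1 by force
  then have "alternates_sign \<Psi>"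
    using \<Psi>_0 \<Psi>_cont by (intro alternates_sign_if_not_nonneg) auto
  moreover have "\<not> (\<forall>x\<in>{0..first_pos_zero \<Phi>}. 0 < \<Psi> x)"
    using transfer_pos[of "first_pos_zero \<Phi>"] z1 by force
  then have "\<exists>x. 0 < x \<and> x \<le> first_pos_zero \<Phi> \<and> \<Psi> x = 0"
    using \<Psi>_0 \<Psi>_cont by (intro exists_pos_zero_if_not_pos) auto
  ultimately show ?thesis
    unfolding \<Phi>_def \<Psi>_def by simp
qed

end
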